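(* Let $G$ be a map graph with a corresponding planar bipartite graph $B$, let $\mathcal{D}=(T,\beta_{\mathcal{D}})$ be a nice tree decomposition of $B$, and let $\mathcal{D}'=(T,\beta_{\mathcal{D}'})$ be derived from $\mathcal{D}$ as described in the context. Let $v\in V(G)$ and $s\in S(G)$ with $v\in N_B(s)$, and suppose $Q=\{t\in V(T): v\in\mathsf{Fake}(t)\text{ and } s\in\beta_{\mathcal{D}}(t)\}\neq\emptyset$. Let $x$ be the node of $T$ labelled forget$(v)$ in $\mathcal{D}$, and let $y$ be the unique child of the node labelled forget$(s)$ in $\mathcal{D}$. Then $y$ is an ancestor of $x$, and $Q$ induces in $T$ exactly the unique path between $x$ and $y$.
   Context: All graphs are finite and simple. For a bipartite graph $B$ with bipartition $V(B)=W\uplus U$, the half-square of $B$ is the graph on $W$ in which two vertices are adjacent iff they are at distance exactly $2$ in $B$. A graph $G$ is a map graph iff it is the half-square of some planar bipartite graph $B$; such $B$ (with $W=V(G)$) is a corresponding planar bipartite graph, and $S(G)=U$ is the set of special vertices. A tree decomposition $(T,\beta)$ of a graph: rooted tree $T$, bags $\beta(t)$, every vertex and every edge covered by some bag, and for each vertex the nodes containing it induce a connected subtree. For a node $t$, $\gamma_{\mathcal{D}}(t)$ is the union of the bags of $t$ and all its descendants. A tree decomposition is nice if the root has empty bag and each node is either a leaf with empty bag, an introduce$(w)$ node (one child $u$, $\beta(t)=\beta(u)\cup\{w\}$, $w\notin\beta(u)$), a forget$(w)$ node (one child $u$, $\beta(t)=\beta(u)\setminus\{w\}$, $w\in\beta(u)$),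 or a join node (two children with bags equal to $\beta(t)$); in a nice tree decomposition, for every vertex $w$ there is exactly one node labelled forget$(w)$. The decomposition $\mathcal{D}'$ derived from $\mathcal{D}$ has the same tree $T$ and bags $\beta_{\mathcal{D}'}(t)=(\beta_{\mathcal{D}}(t)\cap V(G))\cup\bigcup_{s\in\beta_{\mathcal{D}}(t)\cap S(G)}(N_B(s)\cap\gamma_{\mathcal{D}}(t))$. For a node $t$, $\mathsf{Fake}(t)=\beta_{\mathcal{D}'}(t)\setminus\beta_{\mathcal{D}}(t)$. *)

theory Defs
  imports "HOL-Analysis.Analysis"
begin

definition simple_graph :: "'a set \<Rightarrow> 'a set set \<Rightarrow> bool" where
  "simple_graph V E \<longleftrightarrow> finite V \<and> (\<forall>e\<in>E. \<exists>u v. e = {u, v} \<and> u \<noteq> v \<and> u \<in> V \<and> v \<in> V)"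

definition nbhd :: "'a set set \<Rightarrow> 'a \<Rightarrow> 'a set" where
  "nbhd E s = {w. {w, s} \<in> E}"

definition bipartite_with :: "'a set set \<Rightarrow> 'a set \<Rightarrow> 'a set \<Rightarrow> bool" where
  "bipartite_with E W U \<longleftrightarrow> simple_graph (W \<union> U) E \<and> W \<inter> U = {} \<and>
     (\<forall>e\<in>E. \<exists>w u. e = {w, u} \<and> w \<in> W \<and> u \<in> U)"

definition planar_graph :: "'a set \<Rightarrow> 'a set set \<Rightarrow> bool" where
  "planar_graph V E \<longleftrightarrow> (\<exists>(pos :: 'a \<Rightarrow> complex) (c :: 'a set \<Rightarrow> real \<Rightarrow> complex).
     inj_on pos V \<and>
     (\<forall>e\<in>E. arc (c e) \<and> {pathstart (c e), pathfinish (c e)} = pos ` e \<and>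
              path_image (c e) \<inter> pos ` V = pos ` e) \<and>
     (\<forall>e\<in>E. \<forall>e'\<in>E. e \<noteq> e' \<longrightarrow> path_image (c e) \<inter> path_image (c e') \<subseteq> pos ` (e \<inter> e')))"

text \<open>Half-square of B on W: vertices of W at distance exactly 2 in B, i.e. distinct with a
 common neighbour (B bipartite).\<close>
definition half_square_edges :: "'a set set \<Rightarrow> 'a set \<Rightarrow> 'a set set" where
  "half_square_edges E W = {{a, b} | a b. a \<in> W \<and> b \<in> W \<and> a \<noteq> b \<and> (\<exists>u. {a, u} \<in> E \<and> {u, b} \<in> E)}"

text \<open>G = (VG, EG) is a map graph with corresponding planar bipartite graph B = (W \<union> U, EB),
 W = V(G), U = S(G).\<close>
definition map_graph_of :: "'a set \<Rightarrow> 'a set set \<Rightarrow> 'a set \<Rightarrow> 'a set \<Rightarrow> 'a set set \<Rightarrow> bool" where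
  "map_graph_of VG EG W U EB \<longleftrightarrow> bipartite_with EB W U \<and> planar_graph (W \<union> U) EB \<and>
     VG = W \<and> EG = half_square_edges EB W"

definition rooted_tree :: "'t set \<Rightarrow> 't \<Rightarrow> ('t \<Rightarrow> 't) \<Rightarrow> bool" where
  "rooted_tree N r par \<longleftrightarrow> finite N \<and> r \<in> N \<and> (\<forall>t\<in>N - {r}. par t \<in> N) \<and>
     (\<forall>t\<in>N. \<exists>k. (par ^^ k) t = r)"

text \<open>a is an ancestor of b (reflexive: every node is its own ancestor).\<close>
definition ancestor :: "'t set \<Rightarrow> 't \<Rightarrow> ('t \<Rightarrow> 't) \<Rightarrow> 't \<Rightarrow> 't \<Rightarrow> bool" where
  "ancestor N r par a b \<longleftrightarrow> a \<in> N \<and> b \<in> N \<and>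
     (\<exists>k. (par ^^ k) b = a \<and> (\<forall>i<k. (par ^^ i) b \<noteq> r))"

definition children :: "'t set \<Rightarrow> 't \<Rightarrow> ('t \<Rightarrow> 't) \<Rightarrow> 't \<Rightarrow> 't set" where
  "children N r par t = {c \<in> N - {r}. par c = t}"

definition tree_adj :: "'t set \<Rightarrow> 't \<Rightarrow> ('t \<Rightarrow> 't) \<Rightarrow> 't \<Rightarrow> 't \<Rightarrow> bool" where
  "tree_adj N r par a b \<longleftrightarrow> (a \<in> N - {r} \<and> par a = b) \<or> (b \<in> N - {r} \<and> par b = a)"

definition tree_connected :: "'t set \<Rightarrow> 't \<Rightarrow> ('t \<Rightarrow> 't) \<Rightarrow> 't set \<Rightarrow> bool" where
  "tree_connected N r par X \<longleftrightarrow> X \<subseteq> N \<and>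
     (\<forall>a\<in>X. \<forall>b\<in>X. (a, b) \<in> {(p, q). p \<in> X \<and> q \<in> X \<and> tree_adj N r par p q}\<^sup>*)"

definition tree_decomposition ::
  "'a set \<Rightarrow> 'a set set \<Rightarrow> 't set \<Rightarrow> 't \<Rightarrow> ('t \<Rightarrow> 't) \<Rightarrow> ('t \<Rightarrow> 'a set) \<Rightarrow> bool" where
  "tree_decomposition V E N r par bag \<longleftrightarrow> rooted_tree N r par \<and>
     (\<forall>t\<in>N. bag t \<subseteq> V) \<and>
     (\<forall>v\<in>V. \<exists>t\<in>N. v \<in> bag t) \<and>
     (\<forall>e\<in>E. \<exists>t\<in>N. e \<subseteq> bag t) \<and>
     (\<forall>v\<in>V. tree_connected N r par {t \<in> N. v \<in> bag t})"

definition is_leaf_node where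
  "is_leaf_node N r par bag t \<longleftrightarrow> t \<in> N \<and> children N r par t = {} \<and> bag t = {}"

definition is_introduce where
  "is_introduce N r par bag t w \<longleftrightarrow> t \<in> N \<and>
     (\<exists>u. children N r par t = {u} \<and> w \<notin> bag u \<and> bag t = insert w (bag u))"

definition is_forget where
  "is_forget N r par bag t w \<longleftrightarrow> t \<in> N \<and>
     (\<exists>u. children N r par t = {u} \<and> w \<in> bag u \<and> bag t = bag u - {w})"

definition is_join where
  "is_join N r par bag t \<longleftrightarrow> t \<in> N \<and>
     (\<exists>u1 u2. u1 \<noteq> u2 \<and> children N r par t = {u1, u2} \<and> bag u1 = bag t \<and> bag u2 = bag t)"

definition nice_tree_decomposition ::
  "'a set \<Rightarrow> 'a set set \<Rightarrow> 't set \<Rightarrow> 't \<Rightarrow> ('t \<Rightarrow> 't) \<Rightarrow> ('t \<Rightarrow> 'a set) \<Rightarrow> bool" where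
  "nice_tree_decomposition V E N r par bag \<longleftrightarrow> tree_decomposition V E N r par bag \<and>
     bag r = {} \<and>
     (\<forall>t\<in>N. is_leaf_node N r par bag t \<or> (\<exists>w. is_introduce N r par bag t w) \<or>
              (\<exists>w. is_forget N r par bag t w) \<or> is_join N r par bag t)"

definition gamma :: "'t set \<Rightarrow> 't \<Rightarrow> ('t \<Rightarrow> 't) \<Rightarrow> ('t \<Rightarrow> 'a set) \<Rightarrow> 't \<Rightarrow> 'a set" where
  "gamma N r par bag t = \<Union> {bag d | d. ancestor N r par t d}"

definition derived_bag ::
  "'a set \<Rightarrow> 'a set \<Rightarrow> 'a set set \<Rightarrow> 't set \<Rightarrow> 't \<Rightarrow> ('t \<Rightarrow> 't) \<Rightarrow> ('t \<Rightarrow> 'a set) \<Rightarrow> 't \<Rightarrow> 'a set" where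
  "derived_bag W U EB N r par bag t =
     (bag t \<inter> W) \<union> (\<Union>s\<in>bag t \<inter> U. nbhd EB s \<inter> gamma N r par bag t)"

definition Fake ::
  "'a set \<Rightarrow> 'a set \<Rightarrow> 'a set set \<Rightarrow> 't set \<Rightarrow> 't \<Rightarrow> ('t \<Rightarrow> 't) \<Rightarrow> ('t \<Rightarrow> 'a set) \<Rightarrow> 't \<Rightarrow> 'a set" where
  "Fake W U EB N r par bag t = derived_bag W U EB N r par bag t - bag t"

end

theory Submission
  imports Defs
begin

text \<open>The nodes whose bags contain s form a subtree with topmost node y. The nodes t with
 v \<in> \<gamma>(t) but v \<notin> \<beta>(t) are exactly the ancestors of x, because the nodes containing v form a
 subtree whose topmost node is the child of x. When s \<in> \<beta>(t) and v \<in> N(s), v is fake at t iff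
 v \<in> \<gamma>(t) - \<beta>(t), so Q is the s-subtree intersected with the ancestors of x. Some bag below x
 contains the edge vs, hence the s-subtree reaches below x, and by convexity Q is the y-x path.\<close>

lemma ancestor_nodes: "ancestor N r par a b \<Longrightarrow> a \<in> N \<and> b \<in> N"
  unfolding ancestor_def by blast

lemma ancestor_refl: "b \<in> N \<Longrightarrow> ancestor N r par b b"
  unfolding ancestor_def by (auto intro: exI[of _ 0])

lemma ancestor_parent:
  "rooted_tree N r par \<Longrightarrow> c \<in> N \<Longrightarrow> c \<noteq> r \<Longrightarrow> ancestor N r par (par c) c"
  unfolding ancestor_def rooted_tree_def by (auto intro: exI[of _ 1])

lemma ancestor_trans:
  assumes "ancestor N r par a b" "ancestor N r par b c"
  shows "ancestor N r par a c"
proof -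
  obtain k where k: "(par ^^ k) c = b" "\<forall>i<k. (par ^^ i) c \<noteq> r"
    using assms(2) unfolding ancestor_def by blast
  obtain m where m: "(par ^^ m) b = a" "\<forall>i<m. (par ^^ i) b \<noteq> r"
    using assms(1) unfolding ancestor_def by blast
  have "(par ^^ (m + k)) c = a" using k m by (simp add: funpow_add)
  moreover have "(par ^^ i) c \<noteq> r" if "i < m + k" for i
  proof (cases "i < k")
    case False
    then have "(par ^^ i) c = (par ^^ (i - k)) ((par ^^ k) c)"
      by (metis funpow_add le_add_diff_inverse2 not_less comp_apply)
    then show ?thesis using m k that False by auto
  qed (use k in auto)
  ultimately show ?thesis using assms unfolding ancestor_def by blast
qed

lemma ancestor_parent_if_neq:
  assumes "ancestor N r par a c" "a \<noteq> c" "rooted_tree N r par"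
  shows "ancestor N r par a (par c)"
proof -
  obtain k where k: "(par ^^ k) c = a" "\<forall>i<k. (par ^^ i) c \<noteq> r"
    using assms(1) unfolding ancestor_def by blast
  then obtain k' where k': "k = Suc k'" using assms(2) by (cases k) auto
  have "c \<noteq> r" using k k' by (metis funpow_0 zero_less_Suc)
  then have "par c \<in> N" using assms(1,3) unfolding ancestor_def rooted_tree_def by blast
  moreover have "(par ^^ k') (par c) = a"
    using k k' by (simp add: funpow_Suc_right del: funpow.simps)
  moreover have "(par ^^ i) (par c) \<noteq> r" if "i < k'" for i
    using k(2) k' that by (metis Suc_mono comp_apply funpow_Suc_right)
  ultimately show ?thesis using assms(1) unfolding ancestor_def by blast
qed

definition depth :: "'t \<Rightarrow> ('t \<Rightarrow> 't) \<Rightarrow> 't \<Rightarrow> nat" where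
  "depth r par b = (LEAST j. (par ^^ j) b = r)"

lemma ancestor_depth:
  assumes "ancestor N r par a b" "rooted_tree N r par"
  shows "\<exists>k. (par ^^ k) b = a \<and> depth r par b = k + depth r par a"
proof -
  obtain k where k: "(par ^^ k) b = a" "\<forall>i<k. (par ^^ i) b \<noteq> r"
    using assms(1) unfolding ancestor_def by blast
  have "a \<in> N" "b \<in> N" using assms(1) by (auto dest: ancestor_nodes)
  then obtain ja jb where "(par ^^ ja) a = r" "(par ^^ jb) b = r"
    using assms(2) unfolding rooted_tree_def by blast
  then have da: "(par ^^ depth r par a) a = r" and db: "(par ^^ depth r par b) b = r"
    unfolding depth_def by (auto intro: LeastI)
  have "k \<le> depth r par b" using k(2) db by (meson not_le)
  moreover have "(par ^^ (depth r par b - k)) a = r"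
    using db k \<open>k \<le> depth r par b\<close> by (metis funpow_add le_add_diff_inverse2 comp_apply)
  then have "depth r par a \<le> depth r par b - k" unfolding depth_def by (rule Least_le)
  moreover have "(par ^^ (depth r par a + k)) b = r" using da k by (simp add: funpow_add)
  then have "depth r par b \<le> depth r par a + k" unfolding depth_def by (rule Least_le)
  ultimately show ?thesis using k by (intro exI[of _ k]) auto
qed

lemma ancestor_antisym:
  assumes "ancestor N r par a b" "ancestor N r par b a" "rooted_tree N r par"
  shows "a = b"
  using ancestor_depth[OF assms(1,3)] ancestor_depth[OF assms(2,3)] by fastforce

lemma parent_neq_self:
  assumes "rooted_tree N r par" "c \<in> N" "c \<noteq> r"
  shows "par c \<noteq> c"
proof
  assume "par c = c"
  then have "(par ^^ k) c = c" for k by (induction k) auto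
  then show False using assms unfolding rooted_tree_def by metis
qed

lemma ancestors_linear:
  assumes "ancestor N r par a d" "ancestor N r par b d"
  shows "ancestor N r par a b \<or> ancestor N r par b a"
proof -
  have along: "ancestor N r par q' p'"
    if "(par ^^ p) d = p'" "(par ^^ q) d = q'" "p \<le> q" "\<forall>l<q. (par ^^ l) d \<noteq> r"
       "p' \<in> N" "q' \<in> N"
    for p q p' q'
  proof -
    have "(par ^^ (q - p)) p' = q'" using that
      by (metis funpow_add le_add_diff_inverse2 comp_apply)
    moreover have "(par ^^ l) p' \<noteq> r" if "l < q - p" for l
      using that \<open>(par ^^ p) d = p'\<close> \<open>p \<le> q\<close> \<open>\<forall>l<q. (par ^^ l) d \<noteq> r\<close>
      by (metis add_less_cancel_right comp_apply funpow_add le_add_diff_inverse2)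
    ultimately show ?thesis using that unfolding ancestor_def by blast
  qed
  obtain i where "(par ^^ i) d = a" "\<forall>l<i. (par ^^ l) d \<noteq> r"
    using assms(1) unfolding ancestor_def by blast
  moreover obtain j where "(par ^^ j) d = b" "\<forall>l<j. (par ^^ l) d \<noteq> r"
    using assms(2) unfolding ancestor_def by blast
  moreover have "a \<in> N" "b \<in> N" using assms by (auto dest: ancestor_nodes)
  ultimately show ?thesis using along[of i a j b] along[of j b i a] by (cases "i \<le> j") auto
qed

lemma tree_path_leaves_subtree_via_parent:
  assumes rt: "rooted_tree N r par"
    and path: "(a, b) \<in> {(p, q). p \<in> X \<and> q \<in> X \<and> tree_adj N r par p q}\<^sup>*"
    and "ancestor N r par z a" "\<not> ancestor N r par z b"
  shows "z \<in> X \<and> par z \<in> X"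
  using path assms(3,4)
proof (induction rule: rtrancl_induct)
  case (step p q)
  show ?case
  proof (cases "ancestor N r par z p")
    case True
    have pq: "p \<in> X" "q \<in> X" "tree_adj N r par p q" using step(2) by auto
    then consider "p \<in> N - {r}" "par p = q" | "q \<in> N - {r}" "par q = p"
      unfolding tree_adj_def by blast
    then show ?thesis
    proof cases
      case 1
      show ?thesis
      proof (cases "z = p")
        case False
        then have "ancestor N r par z q" using ancestor_parent_if_neq[OF True _ rt] 1 by simp
        then show ?thesis using step by blast
      qed (use pq 1 in simp)
    next
      case 2
      then have "ancestor N r par p q" using ancestor_parent[OF rt, of q] by auto
      then have "ancestor N r par z q" using ancestor_trans[OF True] by blast
      then show ?thesis using step by blast
    qed
  qed (use step in blast)
qed simp

lemma tree_connected_top_ancestor: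
  assumes rt: "rooted_tree N r par" and X: "tree_connected N r par X"
    and "y \<in> X" "par y \<notin> X" "w \<in> X"
  shows "ancestor N r par y w"
proof (rule ccontr)
  assume not_below: "\<not> ancestor N r par y w"
  have "y \<in> N" using X \<open>y \<in> X\<close> unfolding tree_connected_def by blast
  then have "ancestor N r par y y" by (rule ancestor_refl)
  moreover have "(y, w) \<in> {(p, q). p \<in> X \<and> q \<in> X \<and> tree_adj N r par p q}\<^sup>*"
    using X assms(3,5) unfolding tree_connected_def by blast
  ultimately have "par y \<in> X"
    using tree_path_leaves_subtree_via_parent[OF rt _ _ not_below] by blast
  then show False using assms(4) by contradiction
qed

lemma tree_connected_convex:
  assumes rt: "rooted_tree N r par" and X: "tree_connected N r par X"
    and "a \<in> X" "d \<in> X" "ancestor N r par a z" "ancestor N r par z d"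
  shows "z \<in> X"
proof (cases "z = a")
  case False
  then have "\<not> ancestor N r par z a" using ancestor_antisym[OF assms(5) _ rt] by auto
  moreover have "(d, a) \<in> {(p, q). p \<in> X \<and> q \<in> X \<and> tree_adj N r par p q}\<^sup>*"
    using X assms(3,4) unfolding tree_connected_def by blast
  ultimately show ?thesis using tree_path_leaves_subtree_via_parent[OF rt _ assms(6)] by blast
qed (use assms in simp)

lemma tree_connected_ancestors_eq_path:
  assumes rt: "rooted_tree N r par" and X: "tree_connected N r par X"
    and "y \<in> X" "par y \<notin> X" "d \<in> X" "ancestor N r par y x" "ancestor N r par x d"
  shows "{t \<in> X. ancestor N r par t x} = {z \<in> N. ancestor N r par y z \<and> ancestor N r par z x}"
proof (intro set_eqI iffI)
  fix z assume "z \<in> {t \<in> X. ancestor N r par t x}"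
  then have z: "z \<in> X" "ancestor N r par z x" by auto
  have "ancestor N r par y z" using tree_connected_top_ancestor[OF rt X assms(3,4) z(1)] .
  then show "z \<in> {z \<in> N. ancestor N r par y z \<and> ancestor N r par z x}"
    using z(2) ancestor_nodes[of N r par z x] by blast
next
  fix z assume "z \<in> {z \<in> N. ancestor N r par y z \<and> ancestor N r par z x}"
  then have z: "ancestor N r par y z" "ancestor N r par z x" by auto
  have "ancestor N r par z d" using ancestor_trans[OF z(2) assms(7)] .
  then have "z \<in> X" by (rule tree_connected_convex[OF rt X assms(3,5) z(1)])
  then show "z \<in> {t \<in> X. ancestor N r par t x}" using z(2) by blast
qed

lemma forget_child_ancestor:
  assumes td: "tree_decomposition V E N r par bag" and "v \<in> V"
    and "is_forget N r par bag x v" "children N r par x = {u}"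
    and "t \<in> N" "v \<in> bag t"
  shows "ancestor N r par u t"
proof -
  have "u \<in> N" "u \<noteq> r" "par u = x" using assms(4) unfolding children_def by auto
  moreover have "v \<in> bag u" "v \<notin> bag x" using assms(3,4) unfolding is_forget_def by auto
  ultimately show ?thesis
    using td assms(2,5,6) tree_connected_top_ancestor[of N r par "{t \<in> N. v \<in> bag t}" u t]
    unfolding tree_decomposition_def by auto
qed

lemma gamma_minus_bag_iff_ancestor_forget:
  assumes td: "tree_decomposition V E N r par bag" and "v \<in> V"
    and x: "is_forget N r par bag x v" and "t \<in> N"
  shows "v \<in> gamma N r par bag t - bag t \<longleftrightarrow> ancestor N r par t x"
proof -
  have rt: "rooted_tree N r par" using td unfolding tree_decomposition_def by blast
  obtain u where u: "children N r par x = {u}" "v \<in> bag u"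
    using x unfolding is_forget_def by blast
  have uN: "u \<in> N" "u \<noteq> r" "par u = x" using u(1) unfolding children_def by auto
  have xu: "ancestor N r par x u" using ancestor_parent[OF rt uN(1,2)] uN(3) by simp
  have below_u: "ancestor N r par u t'" if "t' \<in> N" "v \<in> bag t'" for t'
    using forget_child_ancestor[OF td assms(2) x u(1) that] .
  have V: "tree_connected N r par {t \<in> N. v \<in> bag t}"
    using td assms(2) unfolding tree_decomposition_def by blast
  show ?thesis
  proof
    assume "v \<in> gamma N r par bag t - bag t"
    then obtain d where d: "ancestor N r par t d" "v \<in> bag d" "v \<notin> bag t"
      unfolding gamma_def by blast
    have dN: "d \<in> N" using ancestor_nodes[OF d(1)] by blast
    have ud: "ancestor N r par u d" using below_u[OF dN d(2)] .
    have "\<not> ancestor N r par u t"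
    proof
      assume "ancestor N r par u t"
      then have "t \<in> {t \<in> N. v \<in> bag t}"
        using tree_connected_convex[OF rt V, of u d t] uN(1) u(2) dN d(1,2) by blast
      then show False using d(3) by blast
    qed
    then have "ancestor N r par t u" using ancestors_linear[OF d(1) ud] by blast
    moreover have "t \<noteq> u" using d(3) u(2) by blast
    ultimately show "ancestor N r par t x"
      using ancestor_parent_if_neq[OF _ _ rt, of t u] uN(3) by simp
  next
    assume tx: "ancestor N r par t x"
    have "ancestor N r par t u" using ancestor_trans[OF tx xu] .
    then have "v \<in> gamma N r par bag t" using u(2) unfolding gamma_def by blast
    moreover have "v \<notin> bag t"
    proof
      assume "v \<in> bag t"
      then have "ancestor N r par u x" using ancestor_trans[OF below_u[OF assms(4)] tx] by blast
      then have "u = x" using ancestor_antisym[OF _ xu rt] by blast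
      then show False using parent_neq_self[OF rt uN(1,2)] uN(3) by simp
    qed
    ultimately show "v \<in> gamma N r par bag t - bag t" by blast
  qed
qed

lemma Fake_iff_gamma_minus_bag:
  assumes "s \<in> bag t" "s \<in> U" "v \<in> nbhd EB s"
  shows "v \<in> Fake W U EB N r par bag t \<longleftrightarrow> v \<in> gamma N r par bag t - bag t"
  using assms unfolding Fake_def derived_bag_def by blast

theorem lemma11:
  fixes VG W U :: "'a set" and EG EB :: "'a set set"
    and N :: "'t set" and r :: 't and par :: "'t \<Rightarrow> 't" and bag :: "'t \<Rightarrow> 'a set"
    and v s :: 'a and x y f :: 't
  assumes "map_graph_of VG EG W U EB"
    and "nice_tree_decomposition (W \<union> U) EB N r par bag"
    and "v \<in> VG" and "s \<in> U" and "v \<in> nbhd EB s"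
    and "{t \<in> N. v \<in> Fake W U EB N r par bag t \<and> s \<in> bag t} \<noteq> {}"
    and "is_forget N r par bag x v"
    and "is_forget N r par bag f s" and "children N r par f = {y}"
  shows "ancestor N r par y x \<and>
         {t \<in> N. v \<in> Fake W U EB N r par bag t \<and> s \<in> bag t} =
         {z \<in> N. ancestor N r par y z \<and> ancestor N r par z x}"
proof -
  have td: "tree_decomposition (W \<union> U) EB N r par bag"
    using assms(2) unfolding nice_tree_decomposition_def by blast
  have rt: "rooted_tree N r par" using td unfolding tree_decomposition_def by blast
  have v: "v \<in> W \<union> U" using assms(1,3) unfolding map_graph_of_def by blast
  define S where "S = {t \<in> N. s \<in> bag t}"
  have S: "tree_connected N r par S" using td assms(4) unfolding S_def tree_decomposition_def by blast
  have y: "y \<in> S" "par y \<notin> S"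
    using assms(8,9) unfolding S_def is_forget_def children_def by auto
  have "v \<in> Fake W U EB N r par bag t \<longleftrightarrow> ancestor N r par t x" if "t \<in> N" "s \<in> bag t" for t
    using Fake_iff_gamma_minus_bag[where bag = bag and t = t and W = W and N = N and r = r
        and par = par, OF that(2) assms(4,5)]
      gamma_minus_bag_iff_ancestor_forget[OF td v assms(7) that(1)] by simp
  then have Q: "{t \<in> N. v \<in> Fake W U EB N r par bag t \<and> s \<in> bag t} = {t \<in> S. ancestor N r par t x}"
    unfolding S_def by blast
  then obtain t0 where t0: "t0 \<in> S" "ancestor N r par t0 x" using assms(6) by blast
  have yx: "ancestor N r par y x"
    using ancestor_trans[OF tree_connected_top_ancestor[OF rt S y t0(1)] t0(2)] .
  have "{v, s} \<in> EB" using assms(5) unfolding nbhd_def by blast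
  then obtain d where d: "d \<in> N" "{v, s} \<subseteq> bag d"
    using td unfolding tree_decomposition_def by blast
  obtain u where u: "children N r par x = {u}" using assms(7) unfolding is_forget_def by blast
  then have uN: "u \<in> N" "u \<noteq> r" "par u = x" unfolding children_def by auto
  have "ancestor N r par x u" using ancestor_parent[OF rt uN(1,2)] uN(3) by simp
  moreover have "ancestor N r par u d"
    using forget_child_ancestor[OF td v assms(7) u d(1)] d(2) by blast
  ultimately have "ancestor N r par x d" by (rule ancestor_trans)
  moreover have "d \<in> S" using d unfolding S_def by blast
  ultimately have "{t \<in> S. ancestor N r par t x} = {z \<in> N. ancestor N r par y z \<and> ancestor N r par z x}"
    using tree_connected_ancestors_eq_path[OF rt S y _ yx] by blast
  with Q yx show ?thesis by simp
qed

end
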